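(* Let $(X,\Sigma)$ be a random pair valued in $\mathcal{X}\times\mathfrak{S}_n$. Suppose that $P_x\in\mathcal{T}$ for all $x\in\mathcal{X}$ and that $H=\inf_{x\in\mathcal{X}}\min_{i<j}|p_{i,j}(x)-1/2|>0$. Let $s:\mathcal{X}\to\mathfrak{S}_n$ be measurable and set $$Z(s)=\sum_{i<j}\mathbb{I}\{(\Sigma(i)-\Sigma(j))(s(X)(i)-s(X)(j))<0\}-\sum_{i<j}\mathbb{I}\{(\Sigma(i)-\Sigma(j))(\sigma^*_{P_X}(i)-\sigma^*_{P_X}(j))<0\}.$$ Then $$\mathrm{Var}(Z(s))\le\Big(\frac{n(n-1)}{2H}\Big)\times(\mathcal{R}(s)-\mathcal{R}^* ).$$
   Context: $\mathfrak{S}_n$ is the set of permutations of $\{1,\dots,n\}$. The Kendall $\tau$ distance is $d_\tau(\sigma,\sigma')=\sum_{i<j}\mathbb{I}\{(\sigma(i)-\sigma(j))(\sigma'(i)-\sigma'(j))<0\}$. Conditional objects: $P_x$ is the conditional law of $\Sigma$ given $X=x$, and $p_{i,j}(x)=\mathbb{P}\{\Sigma(i)<\Sigma(j)\mid X=x\}$. $\mathcal{T}$ is the set of distributions $P$ on $\mathfrak{S}_n$ whose pairwise probabilities $p_{i,j}=\mathbb{P}_{\Sigma\sim P}\{\Sigma(i)<\Sigma(j)\}$ satisfy (a) $p_{i,j}\ge1/2$ and $p_{j,k}\ge1/2$ imply $p_{i,k}\ge1/2$, and (b) $p_{i,j}\ne1/2$ for $i<j$. For $P\in\mathcal{T}$,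 $\sigma^*_P(i)=1+\sum_{k\ne i}\mathbb{I}\{p_{i,k}<1/2\}$ is the unique Kemeny median, i.e. the unique minimizer of $\sigma\mapsto\mathbb{E}_{\Sigma\sim P}[d_\tau(\Sigma,\sigma)]$. The risk is $\mathcal{R}(s)=\mathbb{E}[d_\tau(s(X),\Sigma)]$, and $\mathcal{R}^*$ is its infimum over measurable rules $\mathcal{X}\to\mathfrak{S}_n$. *)

theory Defs
  imports "HOL-Probability.Probability" "HOL-Combinatorics.Permutations"
begin

definition perms :: "nat \<Rightarrow> (nat \<Rightarrow> nat) set" where
  "perms n = {\<sigma>. \<sigma> permutes {1..n}}"

definition kendall :: "nat \<Rightarrow> (nat \<Rightarrow> nat) \<Rightarrow> (nat \<Rightarrow> nat) \<Rightarrow> nat" where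
  "kendall n \<sigma> \<sigma>' = card {(i,j). 1 \<le> i \<and> i < j \<and> j \<le> n \<and>
      (int (\<sigma> i) - int (\<sigma> j)) * (int (\<sigma>' i) - int (\<sigma>' j)) < 0}"

definition pairp :: "(nat \<Rightarrow> nat) pmf \<Rightarrow> nat \<Rightarrow> nat \<Rightarrow> real" where
  "pairp Q i j = measure_pmf.prob Q {\<sigma>. \<sigma> i < \<sigma> j}"

definition in_T :: "nat \<Rightarrow> (nat \<Rightarrow> nat) pmf \<Rightarrow> bool" where
  "in_T n Q \<longleftrightarrow> set_pmf Q \<subseteq> perms n \<and>
     (\<forall>i\<in>{1..n}. \<forall>j\<in>{1..n}. \<forall>k\<in>{1..n}. i \<noteq> j \<and> j \<noteq> k \<and> i \<noteq> k \<longrightarrow>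
        pairp Q i j \<ge> 1/2 \<longrightarrow> pairp Q j k \<ge> 1/2 \<longrightarrow> pairp Q i k \<ge> 1/2) \<and>
     (\<forall>i\<in>{1..n}. \<forall>j\<in>{1..n}. i < j \<longrightarrow> pairp Q i j \<noteq> 1/2)"

text \<open>Kemeny median sigma^*_Q (identity outside {1..n}).\<close>
definition kemeny :: "nat \<Rightarrow> (nat \<Rightarrow> nat) pmf \<Rightarrow> nat \<Rightarrow> nat" where
  "kemeny n Q i = (if i \<in> {1..n}
      then 1 + card {k\<in>{1..n}. k \<noteq> i \<and> pairp Q i k < 1/2} else i)"

text \<open>Expectation of f(X,Sigma) where X ~ mu and Sigma | X=x ~ P x.\<close>
definition expect :: "'a measure \<Rightarrow> ('a \<Rightarrow> (nat \<Rightarrow> nat) pmf) \<Rightarrow> ('a \<Rightarrow> (nat \<Rightarrow> nat) \<Rightarrow> real) \<Rightarrow> real" where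
  "expect \<mu> P f = (\<integral>x. measure_pmf.expectation (P x) (f x) \<partial>\<mu>)"

definition variance_of :: "'a measure \<Rightarrow> ('a \<Rightarrow> (nat \<Rightarrow> nat) pmf) \<Rightarrow> ('a \<Rightarrow> (nat \<Rightarrow> nat) \<Rightarrow> real) \<Rightarrow> real" where
  "variance_of \<mu> P f = expect \<mu> P (\<lambda>x \<sigma>. (f x \<sigma> - expect \<mu> P f)\<^sup>2)"

definition risk :: "nat \<Rightarrow> 'a measure \<Rightarrow> ('a \<Rightarrow> (nat \<Rightarrow> nat) pmf) \<Rightarrow> ('a \<Rightarrow> nat \<Rightarrow> nat) \<Rightarrow> real" where
  "risk n \<mu> P s = expect \<mu> P (\<lambda>x \<sigma>. real (kendall n (s x) \<sigma>))"

definition risk_star :: "nat \<Rightarrow> 'a measure \<Rightarrow> ('a \<Rightarrow> (nat \<Rightarrow> nat) pmf) \<Rightarrow> real" where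
  "risk_star n \<mu> P = (INF s \<in> measurable \<mu> (count_space (perms n)). risk n \<mu> P s)"

definition Zs :: "nat \<Rightarrow> ('a \<Rightarrow> (nat \<Rightarrow> nat) pmf) \<Rightarrow> ('a \<Rightarrow> nat \<Rightarrow> nat) \<Rightarrow> 'a \<Rightarrow> (nat \<Rightarrow> nat) \<Rightarrow> real" where
  "Zs n P s x \<sigma> = real (kendall n \<sigma> (s x)) - real (kendall n \<sigma> (kemeny n (P x)))"

definition margin :: "nat \<Rightarrow> 'a measure \<Rightarrow> ('a \<Rightarrow> (nat \<Rightarrow> nat) pmf) \<Rightarrow> real" where
  "margin n \<mu> P = (INF x \<in> space \<mu>.
      Min {\<bar>pairp (P x) i j - 1/2\<bar> | i j. 1 \<le> i \<and> i < j \<and> j \<le> n})"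

end

theory Submission
  imports Defs
begin

(*
  Fix x and write t = s(x) and m = \<sigma>*(P x). Both Kendall distances are sums over the pairs i < j
  of discordance indicators. The median m orders every pair by majority, so the conditional
  expectation of the pair's contribution to Z vanishes when t and m agree on the pair and equals
  |p_ij(x) - p_ji(x)| \<ge> 2H otherwise; hence E[Z | X = x] \<ge> 2H d(t, m). On the other hand the
  triangle inequality gives |Z| \<le> d(t, m) \<le> n(n-1), so E[Z^2 | X = x] \<le> n(n-1)/(2H) E[Z | X = x].
  Integrating, Var Z \<le> E Z^2 \<le> n(n-1)/(2H) E Z, and E Z = R(s) - R(\<sigma>*(P X)) \<le> R(s) - R*.
*)

definition kendall_pairs :: "nat \<Rightarrow> (nat \<times> nat) set" where
  "kendall_pairs n = {(i, j). 1 \<le> i \<and> i < j \<and> j \<le> n}"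

definition discordant :: "(nat \<Rightarrow> nat) \<Rightarrow> (nat \<Rightarrow> nat) \<Rightarrow> nat \<times> nat \<Rightarrow> bool" where
  "discordant a b = (\<lambda>(i, j). (int (a i) - int (a j)) * (int (b i) - int (b j)) < 0)"

lemma finite_kendall_pairs: "finite (kendall_pairs n)"
  by (rule finite_subset[of _ "{1..n} \<times> {1..n}"]) (auto simp: kendall_pairs_def)

lemma kendall_eq_sum_discordant:
  "real (kendall n a b) = (\<Sum>p\<in>kendall_pairs n. of_bool (discordant a b p))"
proof -
  have "kendall n a b = card {p \<in> kendall_pairs n. discordant a b p}"
    unfolding kendall_def kendall_pairs_def discordant_def by (rule arg_cong[where f = card]) auto
  then show ?thesis
    using finite_kendall_pairs by (simp add: of_bool_def sum.If_cases Int_def)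
qed

lemma kendall_commute: "kendall n a b = kendall n b a"
  unfolding kendall_def by (simp add: mult.commute)

lemma kendall_le: "kendall n a b \<le> n * (n - 1)"
proof -
  have "kendall n a b \<le> card (kendall_pairs n)"
    unfolding kendall_def kendall_pairs_def
    by (rule card_mono) (auto intro: finite_subset[of _ "{1..n} \<times> {1..n}"])
  also have "\<dots> \<le> card ({1..n} \<times> {2..n})"
    by (rule card_mono) (auto simp: kendall_pairs_def)
  finally show ?thesis by (simp add: card_cartesian_product)
qed

lemma finite_perms: "finite (perms n)"
  unfolding perms_def by (rule finite_permutations) simp

lemma perms_neq: "\<sigma> \<in> perms n \<Longrightarrow> i \<noteq> j \<Longrightarrow> \<sigma> i \<noteq> \<sigma> j"
  unfolding perms_def by (metis permutes_inj inj_eq mem_Collect_eq)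

lemma abs_discordant_diff_le:
  assumes "a i \<noteq> a j" "b i \<noteq> b j"
  shows "\<bar>of_bool (discordant \<sigma> a (i, j)) - of_bool (discordant \<sigma> b (i, j))\<bar>
    \<le> (of_bool (discordant a b (i, j)) :: real)"
  using assms by (auto simp: discordant_def mult_less_0_iff)

lemma abs_kendall_diff_le:
  assumes "a \<in> perms n" "b \<in> perms n"
  shows "\<bar>real (kendall n \<sigma> a) - real (kendall n \<sigma> b)\<bar> \<le> real (kendall n a b)"
proof -
  have "\<bar>real (kendall n \<sigma> a) - real (kendall n \<sigma> b)\<bar>
      \<le> (\<Sum>p\<in>kendall_pairs n. \<bar>of_bool (discordant \<sigma> a p) - of_bool (discordant \<sigma> b p)\<bar>)"
    unfolding kendall_eq_sum_discordant sum_subtractf[symmetric] by (rule sum_abs)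
  also have "\<dots> \<le> (\<Sum>p\<in>kendall_pairs n. of_bool (discordant a b p))"
  proof (rule sum_mono)
    fix p assume "p \<in> kendall_pairs n"
    then obtain i j where "p = (i, j)" "i \<noteq> j" by (auto simp: kendall_pairs_def)
    with assms show "\<bar>of_bool (discordant \<sigma> a p) - of_bool (discordant \<sigma> b p)\<bar>
        \<le> (of_bool (discordant a b p) :: real)"
      by (simp add: abs_discordant_diff_le perms_neq)
  qed
  finally show ?thesis unfolding kendall_eq_sum_discordant .
qed

lemma pairp_add_pairp_swap:
  assumes "set_pmf Q \<subseteq> perms n" "i \<noteq> j"
  shows "pairp Q i j + pairp Q j i = 1"
proof -
  have "pairp Q i j + pairp Q j i = measure_pmf.prob Q ({\<sigma>. \<sigma> i < \<sigma> j} \<union> {\<sigma>. \<sigma> j < \<sigma> i})"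
    unfolding pairp_def by (subst measure_pmf.finite_measure_Union) auto
  also have "\<dots> = 1"
  proof -
    have "\<forall>\<sigma>\<in>set_pmf Q. \<sigma> i \<noteq> \<sigma> j" using assms perms_neq by blast
    then show ?thesis by (subst measure_pmf.prob_eq_1) (auto simp: AE_measure_pmf_iff nat_neq_iff)
  qed
  finally show ?thesis .
qed

lemma expectation_discordant:
  assumes "a i \<noteq> a j"
  shows "measure_pmf.expectation Q (\<lambda>\<sigma>. of_bool (discordant \<sigma> a (i, j)))
    = (if a i < a j then pairp Q j i else pairp Q i j)"
proof -
  have "(\<lambda>\<sigma>. of_bool (discordant \<sigma> a (i, j)) :: real)
      = indicator {\<sigma>. if a i < a j then \<sigma> j < \<sigma> i else \<sigma> i < \<sigma> j}"
    using assms by (auto simp: discordant_def mult_less_0_iff indicator_def fun_eq_iff)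
  then show ?thesis by (simp add: pairp_def)
qed

lemma in_T_support: "in_T n Q \<Longrightarrow> set_pmf Q \<subseteq> perms n"
  unfolding in_T_def by blast

lemma in_T_pairp_neq_half:
  assumes "in_T n Q" "i \<in> {1..n}" "j \<in> {1..n}" "i \<noteq> j"
  shows "pairp Q i j \<noteq> 1/2"
proof (cases "i < j")
  case False
  with assms have "pairp Q j i \<noteq> 1/2" unfolding in_T_def by auto
  moreover have "pairp Q i j + pairp Q j i = 1"
    using pairp_add_pairp_swap[OF in_T_support] assms by blast
  ultimately show ?thesis by linarith
qed (use assms in \<open>auto simp: in_T_def\<close>)

lemma in_T_pairp_trans:
  assumes "in_T n Q" "i \<in> {1..n}" "j \<in> {1..n}" "k \<in> {1..n}" "i \<noteq> j" "j \<noteq> k" "i \<noteq> k"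
    and "pairp Q i j \<ge> 1/2" "pairp Q j k \<ge> 1/2"
  shows "pairp Q i k \<ge> 1/2"
  using assms unfolding in_T_def by blast

lemma kemeny_less:
  assumes "in_T n Q" "i \<in> {1..n}" "j \<in> {1..n}" "pairp Q i j > 1/2"
  shows "kemeny n Q i < kemeny n Q j"
proof -
  let ?ahead = "\<lambda>i. {k \<in> {1..n}. k \<noteq> i \<and> pairp Q i k < 1/2}"
  \<comment> \<open>Stochastic transitivity makes these sets nested: whatever is ahead of i is ahead of j.\<close>
  have "i \<noteq> j" using assms(4) by (auto simp: pairp_def)
  then have "pairp Q j i < 1/2"
    using pairp_add_pairp_swap[OF in_T_support[OF assms(1)]] assms(4) by fastforce
  then have "i \<in> ?ahead j" "i \<notin> ?ahead i" using assms(2) \<open>i \<noteq> j\<close> by auto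
  moreover have "?ahead i \<subseteq> ?ahead j"
  proof
    fix k assume k: "k \<in> ?ahead i"
    show "k \<in> ?ahead j"
    proof (rule ccontr)
      assume "k \<notin> ?ahead j"
      moreover have "k \<noteq> j" using k assms(4) by auto
      ultimately have "pairp Q j k \<ge> 1/2" using k by auto
      then have "pairp Q i k \<ge> 1/2"
        using k assms \<open>i \<noteq> j\<close> by (intro in_T_pairp_trans[of n Q i j k]) auto
      with k show False by simp
    qed
  qed
  ultimately have "card (?ahead i) < card (?ahead j)" by (intro psubset_card_mono) auto
  with assms show ?thesis unfolding kemeny_def by simp
qed

lemma kemeny_less_iff:
  assumes "in_T n Q" "i \<in> {1..n}" "j \<in> {1..n}" "i \<noteq> j"
  shows "kemeny n Q i < kemeny n Q j \<longleftrightarrow> pairp Q i j > 1/2"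
proof -
  have "pairp Q i j + pairp Q j i = 1"
    using pairp_add_pairp_swap[OF in_T_support] assms by blast
  moreover have "pairp Q i j \<noteq> 1/2" using in_T_pairp_neq_half assms by blast
  ultimately have "pairp Q i j > 1/2 \<longleftrightarrow> \<not> pairp Q j i > 1/2" by auto
  then show ?thesis
    using kemeny_less[OF assms(1-3)] kemeny_less[OF assms(1) assms(3,2)] by auto
qed

lemma kemeny_neq:
  assumes "in_T n Q" "i \<in> {1..n}" "j \<in> {1..n}" "i \<noteq> j"
  shows "kemeny n Q i \<noteq> kemeny n Q j"
proof -
  have "pairp Q i j + pairp Q j i = 1"
    using pairp_add_pairp_swap[OF in_T_support] assms by blast
  moreover have "pairp Q i j \<noteq> 1/2" using in_T_pairp_neq_half assms by blast
  ultimately have "pairp Q i j > 1/2 \<or> pairp Q j i > 1/2" by auto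
  then show ?thesis
    using kemeny_less[OF assms(1-3)] kemeny_less[OF assms(1) assms(3,2)] by auto
qed

lemma kemeny_in_perms:
  assumes "in_T n Q"
  shows "kemeny n Q \<in> perms n"
proof -
  have maps_to: "kemeny n Q ` {1..n} \<subseteq> {1..n}"
  proof clarify
    fix i assume i: "i \<in> {1..n}"
    have "card {k \<in> {1..n}. k \<noteq> i \<and> pairp Q i k < 1/2} \<le> card ({1..n} - {i})"
      by (rule card_mono) auto
    with i show "kemeny n Q i \<in> {1..n}" unfolding kemeny_def by auto
  qed
  have inj: "inj_on (kemeny n Q) {1..n}"
    using kemeny_neq[OF assms] by (meson inj_onI)
  have "bij_betw (kemeny n Q) {1..n} {1..n}"
    using endo_inj_surj[OF _ maps_to inj] inj by (simp add: bij_betw_def)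
  moreover have "kemeny n Q i = i" if "i \<notin> {1..n}" for i
    using that by (auto simp: kemeny_def)
  ultimately show ?thesis unfolding perms_def by (blast intro: bij_imp_permutes)
qed

lemma expectation_discordant_excess:
  assumes "in_T n Q" "t \<in> perms n" "(i, j) \<in> kendall_pairs n"
  shows "measure_pmf.expectation Q
      (\<lambda>\<sigma>. of_bool (discordant \<sigma> t (i, j)) - of_bool (discordant \<sigma> (kemeny n Q) (i, j)))
    = of_bool (discordant t (kemeny n Q) (i, j)) * \<bar>pairp Q i j - pairp Q j i\<bar>"
proof -
  let ?m = "kemeny n Q"
  have ij: "i \<in> {1..n}" "j \<in> {1..n}" "i \<noteq> j" using assms(3) by (auto simp: kendall_pairs_def)
  have t: "t i \<noteq> t j" using perms_neq[OF assms(2) ij(3)] .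
  have m: "?m i \<noteq> ?m j" using kemeny_neq[OF assms(1) ij] .
  have sum: "pairp Q i j + pairp Q j i = 1" using pairp_add_pairp_swap[OF in_T_support[OF assms(1)] ij(3)] .
  have m_less: "?m i < ?m j \<longleftrightarrow> pairp Q i j > pairp Q j i"
    using kemeny_less_iff[OF assms(1) ij] sum by auto
  have "measure_pmf.expectation Q
      (\<lambda>\<sigma>. of_bool (discordant \<sigma> t (i, j)) - of_bool (discordant \<sigma> ?m (i, j)))
    = (if t i < t j then pairp Q j i else pairp Q i j) - (if ?m i < ?m j then pairp Q j i else pairp Q i j)"
    using in_T_support[OF assms(1)] finite_perms
    by (simp add: Bochner_Integration.integral_diff integrable_measure_pmf_finite finite_subset
        expectation_discordant t m)
  also have "\<dots> = of_bool (discordant t ?m (i, j)) * \<bar>pairp Q i j - pairp Q j i\<bar>"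
    using t m m_less by (auto simp: discordant_def mult_less_0_iff)
  finally show ?thesis .
qed

lemma expectation_kendall_excess:
  assumes "in_T n Q" "t \<in> perms n"
  shows "measure_pmf.expectation Q (\<lambda>\<sigma>. real (kendall n \<sigma> t) - real (kendall n \<sigma> (kemeny n Q)))
    = (\<Sum>(i, j)\<in>kendall_pairs n. of_bool (discordant t (kemeny n Q) (i, j)) * \<bar>pairp Q i j - pairp Q j i\<bar>)"
proof -
  have "finite (set_pmf Q)" using in_T_support[OF assms(1)] finite_perms by (rule finite_subset)
  then have "measure_pmf.expectation Q (\<lambda>\<sigma>. real (kendall n \<sigma> t) - real (kendall n \<sigma> (kemeny n Q)))
    = (\<Sum>p\<in>kendall_pairs n. measure_pmf.expectation Q
        (\<lambda>\<sigma>. of_bool (discordant \<sigma> t p) - of_bool (discordant \<sigma> (kemeny n Q) p)))"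
    unfolding kendall_eq_sum_discordant sum_subtractf[symmetric]
    by (simp add: Bochner_Integration.integral_sum integrable_measure_pmf_finite)
  also have "\<dots> = (\<Sum>(i, j)\<in>kendall_pairs n.
      of_bool (discordant t (kemeny n Q) (i, j)) * \<bar>pairp Q i j - pairp Q j i\<bar>)"
    by (rule sum.cong) (auto simp: expectation_discordant_excess assms)
  finally show ?thesis .
qed

lemma expectation_kendall_excess_ge:
  assumes "in_T n Q" "t \<in> perms n"
    and margin: "\<And>i j. (i, j) \<in> kendall_pairs n \<Longrightarrow> H \<le> \<bar>pairp Q i j - 1/2\<bar>"
  shows "2 * H * real (kendall n t (kemeny n Q))
    \<le> measure_pmf.expectation Q (\<lambda>\<sigma>. real (kendall n \<sigma> t) - real (kendall n \<sigma> (kemeny n Q)))"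
proof -
  have "2 * H \<le> \<bar>pairp Q i j - pairp Q j i\<bar>" if "(i, j) \<in> kendall_pairs n" for i j
  proof -
    have "pairp Q i j + pairp Q j i = 1"
      using pairp_add_pairp_swap[OF in_T_support[OF assms(1)]] that by (auto simp: kendall_pairs_def)
    then show ?thesis using margin[OF that] by (auto simp: abs_if split: if_splits)
  qed
  then have "(\<Sum>(i, j)\<in>kendall_pairs n. of_bool (discordant t (kemeny n Q) (i, j)) * (2 * H))
    \<le> (\<Sum>(i, j)\<in>kendall_pairs n. of_bool (discordant t (kemeny n Q) (i, j)) * \<bar>pairp Q i j - pairp Q j i\<bar>)"
    by (intro sum_mono) (auto intro: mult_left_mono)
  also have "\<dots> = measure_pmf.expectation Q
      (\<lambda>\<sigma>. real (kendall n \<sigma> t) - real (kendall n \<sigma> (kemeny n Q)))"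
    by (rule expectation_kendall_excess[OF assms(1,2), symmetric])
  finally show ?thesis
    by (simp add: kendall_eq_sum_discordant sum_distrib_left sum_distrib_right mult.commute case_prod_beta)
qed

lemma expectation_kendall_excess_sq_le:
  assumes "in_T n Q" "t \<in> perms n" "H > 0"
    and "\<And>i j. (i, j) \<in> kendall_pairs n \<Longrightarrow> H \<le> \<bar>pairp Q i j - 1/2\<bar>"
  defines "Z \<equiv> \<lambda>\<sigma>. real (kendall n \<sigma> t) - real (kendall n \<sigma> (kemeny n Q))"
  shows "measure_pmf.expectation Q (\<lambda>\<sigma>. (Z \<sigma>)\<^sup>2)
    \<le> real (n * (n - 1)) / (2 * H) * measure_pmf.expectation Q Z"
proof -
  define D where "D = real (kendall n t (kemeny n Q))"
  have "finite (set_pmf Q)" using in_T_support[OF assms(1)] finite_perms by (rule finite_subset)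
  moreover have "(Z \<sigma>)\<^sup>2 \<le> D\<^sup>2" for \<sigma>
    using abs_kendall_diff_le[OF assms(2) kemeny_in_perms[OF assms(1)]] unfolding Z_def D_def
    by (metis abs_ge_zero power2_abs power_mono)
  ultimately have "measure_pmf.expectation Q (\<lambda>\<sigma>. (Z \<sigma>)\<^sup>2) \<le> D\<^sup>2"
    by (intro measure_pmf.integral_le_const) (auto simp: integrable_measure_pmf_finite)
  also have "\<dots> \<le> real (n * (n - 1)) * D"
  proof -
    have "D \<le> real (n * (n - 1))" unfolding D_def using kendall_le of_nat_mono by blast
    then show ?thesis unfolding power2_eq_square D_def by (intro mult_right_mono) auto
  qed
  also have "\<dots> \<le> real (n * (n - 1)) * (measure_pmf.expectation Q Z / (2 * H))"
    using expectation_kendall_excess_ge[OF assms(1,2,4)] assms(3)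
    unfolding Z_def D_def by (intro mult_left_mono) (auto simp: field_simps)
  finally show ?thesis by simp
qed

lemma borel_measurable_pmf_expectation:
  assumes "finite A" "\<And>x. x \<in> space M \<Longrightarrow> set_pmf (P x) \<subseteq> A"
    and "\<And>\<sigma>. (\<lambda>x. pmf (P x) \<sigma>) \<in> borel_measurable M"
    and "\<And>\<sigma>. (\<lambda>x. f x \<sigma>) \<in> borel_measurable M"
  shows "(\<lambda>x. measure_pmf.expectation (P x) (f x) :: real) \<in> borel_measurable M"
proof -
  have "(\<lambda>x. \<Sum>\<sigma>\<in>A. f x \<sigma> * pmf (P x) \<sigma>) \<in> borel_measurable M"
    using assms(3,4) by measurable
  moreover have "measure_pmf.expectation (P x) (f x) = (\<Sum>\<sigma>\<in>A. f x \<sigma> * pmf (P x) \<sigma>)"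
    if "x \<in> space M" for x
    using assms(2)[OF that] by (intro integral_measure_pmf_real[OF assms(1)]) auto
  ultimately show ?thesis by (subst measurable_cong) auto
qed

lemma integrable_pmf_expectation:
  assumes "finite_measure M" "finite A" "\<And>x. x \<in> space M \<Longrightarrow> set_pmf (P x) \<subseteq> A"
    and "\<And>\<sigma>. (\<lambda>x. pmf (P x) \<sigma>) \<in> borel_measurable M"
    and "\<And>\<sigma>. (\<lambda>x. f x \<sigma>) \<in> borel_measurable M"
    and "\<And>x \<sigma>. \<bar>f x \<sigma>\<bar> \<le> B"
  shows "integrable M (\<lambda>x. measure_pmf.expectation (P x) (f x) :: real)"
proof (rule finite_measure.integrable_const_bound[OF assms(1)])
  show "AE x in M. norm (measure_pmf.expectation (P x) (f x)) \<le> B"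
  proof (rule AE_I2)
    fix x assume "x \<in> space M"
    then have "finite (set_pmf (P x))" using assms(2,3) by (blast intro: finite_subset)
    then have "measure_pmf.expectation (P x) (\<lambda>\<sigma>. \<bar>f x \<sigma>\<bar>) \<le> B"
      using assms(6) by (intro measure_pmf.integral_le_const) (auto simp: integrable_measure_pmf_finite)
    then show "norm (measure_pmf.expectation (P x) (f x)) \<le> B"
      by (simp add: order_trans[OF integral_abs_bound])
  qed
qed (rule borel_measurable_pmf_expectation[OF assms(2-5)])

lemma expect_diff:
  assumes "finite A" "\<And>x. x \<in> space M \<Longrightarrow> set_pmf (P x) \<subseteq> A"
    and "integrable M (\<lambda>x. measure_pmf.expectation (P x) (f x))"
    and "integrable M (\<lambda>x. measure_pmf.expectation (P x) (g x))"
  shows "expect M P (\<lambda>x \<sigma>. f x \<sigma> - g x \<sigma>) = expect M P f - expect M P g"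
proof -
  have "measure_pmf.expectation (P x) (\<lambda>\<sigma>. f x \<sigma> - g x \<sigma>)
      = measure_pmf.expectation (P x) (f x) - measure_pmf.expectation (P x) (g x)"
    if "x \<in> space M" for x
  proof -
    have "finite (set_pmf (P x))" using assms(1,2) that by (blast intro: finite_subset)
    then show ?thesis by (simp add: Bochner_Integration.integral_diff integrable_measure_pmf_finite)
  qed
  then show ?thesis
    unfolding expect_def using assms(3,4)
    by (subst Bochner_Integration.integral_cong[OF refl]) auto
qed

lemma variance_of_le_expect_square:
  assumes "prob_space M" "finite A" "\<And>x. x \<in> space M \<Longrightarrow> set_pmf (P x) \<subseteq> A"
    and "integrable M (\<lambda>x. measure_pmf.expectation (P x) (f x))"
    and "integrable M (\<lambda>x. measure_pmf.expectation (P x) (\<lambda>\<sigma>. (f x \<sigma>)\<^sup>2))"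
  shows "variance_of M P f \<le> expect M P (\<lambda>x \<sigma>. (f x \<sigma>)\<^sup>2)"
proof -
  interpret prob_space M by (rule assms(1))
  define c where "c = expect M P f"
  have "measure_pmf.expectation (P x) (\<lambda>\<sigma>. (f x \<sigma> - c)\<^sup>2)
      = measure_pmf.expectation (P x) (\<lambda>\<sigma>. (f x \<sigma>)\<^sup>2) - 2 * c * measure_pmf.expectation (P x) (f x) + c\<^sup>2"
    if "x \<in> space M" for x
  proof -
    have "finite (set_pmf (P x))" using assms(2,3) that by (blast intro: finite_subset)
    then show ?thesis
      by (simp add: power2_diff Bochner_Integration.integral_diff Bochner_Integration.integral_add
          integrable_measure_pmf_finite)
  qed
  then have "variance_of M P f = (\<integral>x. measure_pmf.expectation (P x) (\<lambda>\<sigma>. (f x \<sigma>)\<^sup>2)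
      - 2 * c * measure_pmf.expectation (P x) (f x) + c\<^sup>2 \<partial>M)"
    unfolding variance_of_def c_def[symmetric] unfolding expect_def
    by (rule Bochner_Integration.integral_cong[OF refl])
  also have "\<dots> = expect M P (\<lambda>x \<sigma>. (f x \<sigma>)\<^sup>2) - 2 * c * c + c\<^sup>2"
    unfolding expect_def c_def using assms(4,5) by (simp add: prob_space)
  also have "\<dots> = expect M P (\<lambda>x \<sigma>. (f x \<sigma>)\<^sup>2) - c\<^sup>2"
    by (simp add: power2_eq_square)
  finally show ?thesis by simp
qed

lemma borel_measurable_pairp:
  assumes "\<And>x. x \<in> space M \<Longrightarrow> set_pmf (P x) \<subseteq> perms n"
    and "\<And>\<sigma>. (\<lambda>x. pmf (P x) \<sigma>) \<in> borel_measurable M"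
  shows "(\<lambda>x. pairp (P x) i j) \<in> borel_measurable M"
proof -
  have pairp_eq: "pairp (P x) i j = measure_pmf.expectation (P x) (indicator {\<sigma>. \<sigma> i < \<sigma> j})"
    for x by (simp add: pairp_def)
  show ?thesis
    unfolding pairp_eq by (rule borel_measurable_pmf_expectation[OF finite_perms assms]) measurable
qed

lemma measurable_kemeny:
  assumes "\<forall>x\<in>space M. in_T n (P x)"
    and "\<And>\<sigma>. (\<lambda>x. pmf (P x) \<sigma>) \<in> borel_measurable M"
  shows "(\<lambda>x. kemeny n (P x)) \<in> M \<rightarrow>\<^sub>M count_space (perms n)"
proof -
  have [measurable]: "(\<lambda>x. pairp (P x) i j) \<in> borel_measurable M" for i j
    using assms in_T_support by (blast intro: borel_measurable_pairp)
  \<comment> \<open>The median's entries as real sums of indicators, which the measurability prover handles.\<close>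
  define rank where "rank x i = 1 + (\<Sum>k\<in>{1..n}. of_bool (k \<noteq> i \<and> pairp (P x) i k < 1/2) :: real)"
    for x i
  have rank_eq: "real (kemeny n (P x) i) = rank x i" if "i \<in> {1..n}" for x i
    using that by (simp add: kemeny_def rank_def of_bool_def sum.If_cases Int_def)
  have [measurable]: "(\<lambda>x. rank x i) \<in> borel_measurable M" for i
    unfolding rank_def by measurable
  show ?thesis unfolding measurable_count_space_eq2[OF finite_perms]
  proof (intro conjI ballI)
    show "(\<lambda>x. kemeny n (P x)) \<in> space M \<rightarrow> perms n" using assms kemeny_in_perms by auto
  next
    fix \<tau> assume \<tau>: "\<tau> \<in> perms n"
    have "kemeny n Q = \<tau> \<longleftrightarrow> (\<forall>i\<in>{1..n}. kemeny n Q i = \<tau> i)" for Q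
      using \<tau> permutes_not_in by (fastforce simp: perms_def kemeny_def)
    then have "(\<lambda>x. kemeny n (P x)) -` {\<tau>} \<inter> space M = {x \<in> space M. \<forall>i\<in>{1..n}. rank x i = real (\<tau> i)}"
      by (auto simp flip: rank_eq)
    also have "\<dots> \<in> sets M" by measurable
    finally show "(\<lambda>x. kemeny n (P x)) -` {\<tau>} \<inter> space M \<in> sets M" .
  qed
qed

lemma margin_le_abs_pairp:
  assumes "x \<in> space M" "(i, j) \<in> kendall_pairs n"
  shows "margin n M P \<le> \<bar>pairp (P x) i j - 1/2\<bar>"
proof -
  define S where "S y = (\<lambda>(i, j). \<bar>pairp (P y) i j - 1/2\<bar>) ` kendall_pairs n" for y
  have "margin n M P = (INF y\<in>space M. Min (S y))"
    unfolding margin_def S_def kendall_pairs_def by (rule INF_cong) (auto intro!: arg_cong[where f = Min])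
  also have "\<dots> \<le> Min (S x)"
  proof (rule cINF_lower[OF _ assms(1)])
    have "0 \<le> Min (S y)" for y
      using assms(2) finite_kendall_pairs by (subst Min_ge_iff) (auto simp: S_def)
    then show "bdd_below ((\<lambda>y. Min (S y)) ` space M)" by (intro bdd_belowI[of _ 0]) auto
  qed
  also have "\<dots> \<le> \<bar>pairp (P x) i j - 1/2\<bar>"
    using assms(2) finite_kendall_pairs by (intro Min_le) (auto simp: S_def)
  finally show ?thesis .
qed

lemma risk_star_le_risk:
  assumes "s \<in> M \<rightarrow>\<^sub>M count_space (perms n)"
  shows "risk_star n M P \<le> risk n M P s"
  unfolding risk_star_def
proof (rule cINF_lower[OF _ assms])
  show "bdd_below (risk n M P ` (M \<rightarrow>\<^sub>M count_space (perms n)))"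
    by (rule bdd_belowI[of _ 0]) (auto simp: risk_def expect_def intro!: integral_nonneg)
qed

lemma variance_of_le_of_conditional_bound:
  assumes "prob_space M" "finite A" "\<And>x. x \<in> space M \<Longrightarrow> set_pmf (P x) \<subseteq> A"
    and "\<And>\<sigma>. (\<lambda>x. pmf (P x) \<sigma>) \<in> borel_measurable M"
    and "\<And>\<sigma>. (\<lambda>x. f x \<sigma>) \<in> borel_measurable M" "\<And>x \<sigma>. \<bar>f x \<sigma>\<bar> \<le> B"
    and "\<And>x. x \<in> space M \<Longrightarrow>
      measure_pmf.expectation (P x) (\<lambda>\<sigma>. (f x \<sigma>)\<^sup>2) \<le> K * measure_pmf.expectation (P x) (f x)"
  shows "variance_of M P f \<le> K * expect M P f"
proof -
  have finite: "finite_measure M" using assms(1) by (simp add: prob_space_def)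
  have int: "integrable M (\<lambda>x. measure_pmf.expectation (P x) (f x))"
    using integrable_pmf_expectation[OF finite assms(2-6)] .
  have "\<bar>(f x \<sigma>)\<^sup>2\<bar> \<le> B\<^sup>2" for x \<sigma>
    using power_mono[OF assms(6) abs_ge_zero, where n = 2] by simp
  then have int_square: "integrable M (\<lambda>x. measure_pmf.expectation (P x) (\<lambda>\<sigma>. (f x \<sigma>)\<^sup>2))"
    using assms(5) by (intro integrable_pmf_expectation[OF finite assms(2-4)]) auto
  have "variance_of M P f \<le> expect M P (\<lambda>x \<sigma>. (f x \<sigma>)\<^sup>2)"
    by (rule variance_of_le_expect_square[OF assms(1-3) int int_square])
  also have "\<dots> \<le> (\<integral>x. K * measure_pmf.expectation (P x) (f x) \<partial>M)"
    unfolding expect_def using int int_square assms(7) by (intro integral_mono) auto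
  also have "\<dots> = K * expect M P f" by (simp add: expect_def)
  finally show ?thesis .
qed

lemma borel_measurable_kendall_rule:
  assumes "t \<in> M \<rightarrow>\<^sub>M count_space (perms n)"
  shows "(\<lambda>x. real (kendall n \<sigma> (t x))) \<in> borel_measurable M"
  by (rule measurable_compose[OF assms borel_measurable_count_space])

lemma abs_kendall_le: "\<bar>real (kendall n a b)\<bar> \<le> real (n * (n - 1))"
  unfolding abs_of_nat of_nat_le_iff by (rule kendall_le)

lemma expect_kendall_diff:
  assumes "finite_measure M" "\<And>x. x \<in> space M \<Longrightarrow> set_pmf (P x) \<subseteq> perms n"
    and "\<And>\<sigma>. (\<lambda>x. pmf (P x) \<sigma>) \<in> borel_measurable M"
    and "s \<in> M \<rightarrow>\<^sub>M count_space (perms n)" "t \<in> M \<rightarrow>\<^sub>M count_space (perms n)"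
  shows "expect M P (\<lambda>x \<sigma>. real (kendall n \<sigma> (s x)) - real (kendall n \<sigma> (t x)))
    = risk n M P s - risk n M P t"
  unfolding risk_def kendall_commute[of n "s _"] kendall_commute[of n "t _"]
  using assms abs_kendall_le borel_measurable_kendall_rule
  by (intro expect_diff[OF finite_perms] integrable_pmf_expectation[OF _ finite_perms]) auto

theorem lemma16:
  fixes \<mu> :: "'a measure" and P :: "'a \<Rightarrow> (nat \<Rightarrow> nat) pmf" and n :: nat
    and s :: "'a \<Rightarrow> nat \<Rightarrow> nat"
  assumes "prob_space \<mu>"
    and "n \<ge> 2"
    and "\<And>\<sigma>. (\<lambda>x. pmf (P x) \<sigma>) \<in> borel_measurable \<mu>"
    and "\<forall>x\<in>space \<mu>. in_T n (P x)"
    and "margin n \<mu> P > 0"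
    and "s \<in> measurable \<mu> (count_space (perms n))"
  shows "variance_of \<mu> P (Zs n P s)
           \<le> (real (n * (n - 1)) / (2 * margin n \<mu> P)) * (risk n \<mu> P s - risk_star n \<mu> P)"
proof -
  let ?m = "\<lambda>x. kemeny n (P x)"
  define K where "K = real (n * (n - 1)) / (2 * margin n \<mu> P)"
  have support: "\<And>x. x \<in> space \<mu> \<Longrightarrow> set_pmf (P x) \<subseteq> perms n"
    using assms(4) in_T_support by blast
  have m_meas: "?m \<in> \<mu> \<rightarrow>\<^sub>M count_space (perms n)" by (rule measurable_kemeny[OF assms(4,3)])
  have conditional: "measure_pmf.expectation (P x) (\<lambda>\<sigma>. (Zs n P s x \<sigma>)\<^sup>2)
      \<le> K * measure_pmf.expectation (P x) (Zs n P s x)" if "x \<in> space \<mu>" for x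
  proof -
    have "in_T n (P x)" "s x \<in> perms n" using assms(4) measurable_space[OF assms(6)] that by auto
    from expectation_kendall_excess_sq_le[OF this assms(5) margin_le_abs_pairp[OF that]]
    show ?thesis unfolding K_def Zs_def .
  qed
  have "\<bar>Zs n P s x \<sigma>\<bar> \<le> real (n * (n - 1))" for x \<sigma>
    using abs_kendall_le[of n \<sigma> "s x"] abs_kendall_le[of n \<sigma> "?m x"] by (simp add: Zs_def)
  moreover have "(\<lambda>x. Zs n P s x \<sigma>) \<in> borel_measurable \<mu>" for \<sigma>
    unfolding Zs_def using assms(6) m_meas by (intro borel_measurable_diff borel_measurable_kendall_rule)
  ultimately have "variance_of \<mu> P (Zs n P s) \<le> K * expect \<mu> P (Zs n P s)"
    by (intro variance_of_le_of_conditional_bound[OF assms(1) finite_perms support assms(3)] conditional)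
  also have "expect \<mu> P (Zs n P s) = risk n \<mu> P s - risk n \<mu> P ?m"
    using assms(1) support assms(3,6) m_meas unfolding Zs_def prob_space_def
    by (intro expect_kendall_diff) auto
  also have "risk n \<mu> P ?m \<ge> risk_star n \<mu> P" by (rule risk_star_le_risk[OF m_meas])
  then have "K * (risk n \<mu> P s - risk n \<mu> P ?m) \<le> K * (risk n \<mu> P s - risk_star n \<mu> P)"
    using assms(5) by (intro mult_left_mono) (auto simp: K_def)
  finally show ?thesis unfolding K_def .
qed

end
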